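(* Let $n>1$ and $1\le k\le n$ be integers. Let $\boldsymbol S$ be the $(2n-1)\times n$ matrix such that for every $\boldsymbol b=(b_1,\dots,b_n)'\in\mathbb R^n$, writing $a_i=\sum_{j=1}^i b_j$, $$\boldsymbol S\boldsymbol b=(a_n,a_{n-1},\dots,a_2,b_1,b_2,\dots,b_n)'.$$ Let $\boldsymbol S_{[k]}$ be the $(2n-1)\times n$ matrix such that for every $\boldsymbol c=(c_1,\dots,c_n)'\in\mathbb R^n$, $$\boldsymbol S_{[k]}\boldsymbol c=(\alpha_n,\alpha_{n-1},\dots,\alpha_{k+1},\alpha_{k-1},\dots,\alpha_1,c_1,\dots,c_n)',\qquad \alpha_i=\begin{cases}\sum_{j=k}^{i}c_j,& i>k,\\ \sum_{j=i}^{k}c_j,& i\le k.\end{cases}$$ Let $\boldsymbol B_{[k]}$ be the $(2n-1)\times(2n-1)$ signed permutation matrix defined as follows: if $k=1$, $\boldsymbol B_{[1]}=\boldsymbol I_{2n-1}$; if $k\ge 2$, then for every $\boldsymbol z=(u_n,\dots,u_{k+1},u_{k-1},\dots,u_1,v_1,\dots,v_n)'\in\mathbb R^{2n-1}$, $$\boldsymbol B_{[k]}\boldsymbol z=(u_n,\dots,u_{k+1},\,v_k,\,u_{k-1},\dots,u_2,\,u_1,\,-v_1,\dots,-v_{k-1},\,v_{k+1},\dots,v_n)'.$$ Let $\boldsymbol W$ be an invertible $(2n-1)\times(2n-1)$ matrix such that $\boldsymbol S'\boldsymbol W^{-1}\boldsymbol S$ is invertible, and let $\boldsymbol W_{[k]}$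 be an invertible $(2n-1)\times(2n-1)$ matrix. Let $\widehat{\boldsymbol y},\widehat{\boldsymbol y}_{[k]}\in\mathbb R^{2n-1}$ and define $$\widetilde{\boldsymbol y}=\boldsymbol S(\boldsymbol S'\boldsymbol W^{-1}\boldsymbol S)^{-1}\boldsymbol S'\boldsymbol W^{-1}\widehat{\boldsymbol y},\qquad \widetilde{\boldsymbol y}_{[k]}=\boldsymbol S_{[k]}(\boldsymbol S_{[k]}'\boldsymbol W_{[k]}^{-1}\boldsymbol S_{[k]})^{-1}\boldsymbol S_{[k]}'\boldsymbol W_{[k]}^{-1}\widehat{\boldsymbol y}_{[k]}.$$ If $\widehat{\boldsymbol y}=\boldsymbol B_{[k]}\widehat{\boldsymbol y}_{[k]}$ and $\boldsymbol W_{[k]}^{-1}=\boldsymbol B_{[k]}'\boldsymbol W^{-1}\boldsymbol B_{[k]}$, then $\boldsymbol S_{[k]}'\boldsymbol W_{[k]}^{-1}\boldsymbol S_{[k]}$ is invertible (so $\widetilde{\boldsymbol y}_{[k]}$ is well defined) and $$\widetilde{\boldsymbol y}=\boldsymbol B_{[k]}\widetilde{\boldsymbol y}_{[k]}.$$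
   Context: This concerns hierarchical (minimum-trace/GLS) forecast reconciliation of an aggregated curve given by cumulative values $\boldsymbol a=(a_1,\dots,a_n)'$. The canonical representation uses bottom values $b_1=a_1$, $b_i=a_i-a_{i-1}$ ($i>1$) and the stacked vector $\boldsymbol y=(a_n,\dots,a_2,b_1,\dots,b_n)'=\boldsymbol S\boldsymbol b$. An alternative representation disaggregates starting from position $k$: $b_{[k],i}=a_i-a_{i-1}$ for $i>k$, $b_{[k],i}=a_i-a_{i+1}$ for $i<k$, $b_{[k],k}=a_k$, with stacked vector $\boldsymbol y_{[k]}=(a_n,\dots,a_{k+1},a_{k-1},\dots,a_1,\boldsymbol b_{[k]}')'=\boldsymbol S_{[k]}\boldsymbol b_{[k]}$; the matrix $\boldsymbol B_{[k]}$ (orthogonal) satisfies $\boldsymbol y=\boldsymbol B_{[k]}\boldsymbol y_{[k]}$ for such coherent vectors. $\widehat{\boldsymbol y}$, $\widehat{\boldsymbol y}_{[k]}$ are (possibly incoherent) base forecasts and $\widetilde{\boldsymbol y}$, $\widetilde{\boldsymbol y}_{[k]}$ the optimally reconciled forecasts with weight matrices $\boldsymbol W$, $\boldsymbol W_{[k]}$ (in the paper, $\boldsymbol W$ is the covariance matrix of base forecast errors). *)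

theory Defs
  imports "Jordan_Normal_Form.Gauss_Jordan_Elimination"
begin

(* Matrices are Jordan_Normal_Form matrices with 0-based indices.
   Row/column positions p = 0 .. 2n-2 of a (2n-1)-vector; bottom value b_j (1-based j)
   sits in column j-1 of an n-column matrix. *)

definition minv :: "real mat \<Rightarrow> real mat" where
  "minv A = the (mat_inverse A)"

text \<open>Canonical summing matrix S: rows 0..n-2 are a_n, ..., a_2 (row r is a_(n-r),
  a_i = b_1 + ... + b_i), rows n-1 .. 2n-2 are b_1, ..., b_n.\<close>
definition Smat :: "nat \<Rightarrow> real mat" where
  "Smat n = mat (2*n-1) n (\<lambda>(r,c).
     if r < n - 1 then (if c + 1 \<le> n - r then 1 else 0)
     else (if c = r - (n - 1) then 1 else 0))"

text \<open>Index of the aggregate in top row r of y_[k]: n, ..., k+1, k-1, ..., 1.\<close>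
definition topidx :: "nat \<Rightarrow> nat \<Rightarrow> nat \<Rightarrow> nat" where
  "topidx n k r = (if r < n - k then n - r else n - r - 1)"

definition Skmat :: "nat \<Rightarrow> nat \<Rightarrow> real mat" where
  "Skmat n k = mat (2*n-1) n (\<lambda>(r,c).
     if r < n - 1 then
       (let i = topidx n k r in
        if k < i then (if k \<le> c + 1 \<and> c + 1 \<le> i then 1 else 0)
        else (if i \<le> c + 1 \<and> c + 1 \<le> k then 1 else 0))
     else (if c = r - (n - 1) then 1 else 0))"

text \<open>B_[k]: identity for k = 1; for k \<ge> 2 maps
  z = (u_n..u_(k+1), u_(k-1)..u_1, v_1..v_n) to
  (u_n..u_(k+1), v_k, u_(k-1)..u_1, -v_1..-v_(k-1), v_(k+1)..v_n).
  0-based: output p < n-k takes z_p; p = n-k takes z_(n+k-2) (= v_k);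
  n-k < p < n takes z_(p-1); n \<le> p < n+k-1 takes -z_(p-1); p \<ge> n+k-1 takes z_p.\<close>
definition Bkmat :: "nat \<Rightarrow> nat \<Rightarrow> real mat" where
  "Bkmat n k = (if k = 1 then 1\<^sub>m (2*n-1) else mat (2*n-1) (2*n-1) (\<lambda>(p,q).
     if p < n - k then (if q = p then 1 else 0)
     else if p = n - k then (if q = n + k - 2 then 1 else 0)
     else if p < n then (if q = p - 1 then 1 else 0)
     else if p < n + k - 1 then (if q = p - 1 then -1 else 0)
     else (if q = p then 1 else 0)))"

end

theory Submission
  imports Defs "Jordan_Normal_Form.Determinant"
begin

(* With T_[k] the change of bottom coordinates b = T_[k] c, the two representations are linked
   by B_[k] S_[k] = S T_[k], and T_[k] is invertible.  Hence
   S_[k]' W_[k]^-1 S_[k] = T_[k]' (S' W^-1 S) T_[k], whose inverse is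
   T_[k]^-1 (S' W^-1 S)^-1 T_[k]'^-1; substituting it, the factors T_[k] cancel and
   B_[k] times the [k]-reconciliation map equals the canonical reconciliation map times B_[k]. *)

lemma minv_eqI:
  assumes A: "A \<in> carrier_mat m m" and B: "B \<in> carrier_mat m m" and AB: "A * B = 1\<^sub>m m"
  shows "minv A = B"
proof -
  have "A \<in> Units (ring_mat TYPE(real) m undefined)"
    using A B AB mat_mult_left_right_inverse[OF A B AB] by (auto simp: Units_def ring_mat_simps)
  then obtain C where C_def: "mat_inverse A = Some C"
    using mat_inverse(1)[OF A] by fastforce
  then have CA: "C * A = 1\<^sub>m m" and C: "C \<in> carrier_mat m m"
    using mat_inverse(2)[OF A] by auto
  have "C = C * (A * B)" using C by (simp add: AB)
  also have "\<dots> = (C * A) * B" by (rule assoc_mult_mat[OF C A B, symmetric])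
  also have "\<dots> = B" using B by (simp add: CA)
  finally show ?thesis using C_def by (simp add: minv_def)
qed

lemma invertible_matI:
  fixes A :: "'a :: field mat"
  assumes "A \<in> carrier_mat m m" "B \<in> carrier_mat m m" "A * B = 1\<^sub>m m"
  shows "invertible_mat A"
  using assms mat_mult_left_right_inverse[OF assms]
  unfolding invertible_mat_def inverts_mat_def by (intro conjI exI[of _ B]) auto

lemma invertible_mat_minv:
  assumes "invertible_mat A" and A: "A \<in> carrier_mat m m"
  shows "minv A \<in> carrier_mat m m" "A * minv A = 1\<^sub>m m" "minv A * A = 1\<^sub>m m"
proof -
  obtain B where AB: "A * B = 1\<^sub>m m" and BA: "B * A = 1\<^sub>m (dim_row B)"
    using assms unfolding invertible_mat_def inverts_mat_def by auto
  have B: "B \<in> carrier_mat m m"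
    using A AB BA by (metis carrier_matD carrier_matI index_mult_mat(2,3) index_one_mat(2,3))
  then have "minv A = B" using minv_eqI[OF A B AB] by simp
  then show "minv A \<in> carrier_mat m m" "A * minv A = 1\<^sub>m m" "minv A * A = 1\<^sub>m m"
    using B AB mat_mult_left_right_inverse[OF A B AB] by auto
qed

lemma assoc_mult_mat_dim:
  "dim_col (A :: 'a :: semiring_0 mat) = dim_row B \<Longrightarrow> dim_col B = dim_row C \<Longrightarrow>
    A * B * C = A * (B * C)"
  by (rule assoc_mult_mat[of A "dim_row A" "dim_col A" B "dim_col B" C "dim_col C"]) auto

lemma assoc_mult_mat_vec_dim:
  "dim_col (A :: 'a :: semiring_0 mat) = dim_row B \<Longrightarrow> dim_col B = dim_vec v \<Longrightarrow>
    A * B *\<^sub>v v = A *\<^sub>v (B *\<^sub>v v)"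
  by (rule assoc_mult_mat_vec[of A "dim_row A" "dim_col A" B "dim_col B"]) auto

lemma mult_mat_cancel_left:
  fixes A B X :: "'a :: semiring_1 mat"
  assumes "A * B = 1\<^sub>m m" "dim_col A = dim_row B" "dim_row X = m"
  shows "A * (B * X) = X"
proof -
  have "dim_col B = m" using assms(1) by (metis index_mult_mat(3) index_one_mat(3))
  then have "A * (B * X) = (A * B) * X" using assms(2,3) by (simp add: assoc_mult_mat_dim)
  then show ?thesis using assms(1,3) by simp
qed

lemma sum_lessThan_if_less:
  fixes f :: "nat \<Rightarrow> 'a :: comm_monoid_add"
  assumes "m \<le> n"
  shows "(\<Sum>i<n. if i < m then f i else 0) = (\<Sum>i<m. f i)"
proof -
  have "(\<Sum>i<n. if i < m then f i else 0) = (\<Sum>i \<in> {..<n} \<inter> {..<m}. f i)"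
    by (simp add: sum.inter_restrict)
  then show ?thesis using assms by (simp add: Int_absorb1)
qed

lemma reconciliation_change_of_basis:
  fixes B S Sk T P :: "real mat"
  assumes B: "B \<in> carrier_mat N N" and S: "S \<in> carrier_mat N m"
    and Sk: "Sk \<in> carrier_mat N m"
    and T: "T \<in> carrier_mat m m" "invertible_mat T" and P: "P \<in> carrier_mat N N"
    and SPS: "invertible_mat (S\<^sup>T * P * S)" and BSk: "B * Sk = S * T"
  shows "invertible_mat (Sk\<^sup>T * (B\<^sup>T * P * B) * Sk)"
    and "B * (Sk * minv (Sk\<^sup>T * (B\<^sup>T * P * B) * Sk) * Sk\<^sup>T * (B\<^sup>T * P * B))
           = S * minv (S\<^sup>T * P * S) * S\<^sup>T * P * B"
proof -
  define M where "M = S\<^sup>T * P * S"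
  define Mi where "Mi = minv M"
  define Ti where "Ti = minv T"
  define Gi where "Gi = Ti * Mi * Ti\<^sup>T"
  have Mc: "M \<in> carrier_mat m m" unfolding M_def using S P by auto
  then have Mi: "Mi \<in> carrier_mat m m" "M * Mi = 1\<^sub>m m"
    using invertible_mat_minv[OF SPS[folded M_def]] unfolding Mi_def by auto
  have Ti: "Ti \<in> carrier_mat m m" "T * Ti = 1\<^sub>m m" "Ti * T = 1\<^sub>m m"
    using invertible_mat_minv[OF T(2,1)] unfolding Ti_def by auto
  have TiT: "T\<^sup>T * Ti\<^sup>T = 1\<^sub>m m"
    using transpose_mult[OF Ti(1) T(1)] by (simp add: Ti(3))
  note dims[simp] = carrier_matD[OF B] carrier_matD[OF S] carrier_matD[OF Sk]
    carrier_matD[OF T(1)] carrier_matD[OF P] carrier_matD[OF Mc] carrier_matD[OF Mi(1)]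
    carrier_matD[OF Ti(1)]
  have BSk_T: "Sk\<^sup>T * B\<^sup>T = T\<^sup>T * S\<^sup>T"
    using arg_cong[OF BSk, of transpose_mat]
    by (simp add: transpose_mult[OF B Sk] transpose_mult[OF S T(1)])
  have G: "Sk\<^sup>T * (B\<^sup>T * P * B) * Sk = T\<^sup>T * M * T"
  proof -
    have "Sk\<^sup>T * (B\<^sup>T * P * B) * Sk = (Sk\<^sup>T * B\<^sup>T) * P * (B * Sk)"
      by (simp add: assoc_mult_mat_dim)
    also have "\<dots> = T\<^sup>T * M * T"
      unfolding BSk BSk_T M_def by (simp add: assoc_mult_mat_dim)
    finally show ?thesis .
  qed
  have GGi: "T\<^sup>T * M * T * Gi = 1\<^sub>m m"
  proof -
    have "T\<^sup>T * M * T * Gi = T\<^sup>T * (M * (T * (Ti * (Mi * Ti\<^sup>T))))"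
      unfolding Gi_def by (simp add: assoc_mult_mat_dim)
    also have "\<dots> = T\<^sup>T * (M * (Mi * Ti\<^sup>T))"
      using mult_mat_cancel_left[OF Ti(2)] by simp
    also have "\<dots> = T\<^sup>T * Ti\<^sup>T"
      using mult_mat_cancel_left[OF Mi(2)] by simp
    finally show ?thesis using TiT by simp
  qed
  have Gi: "Gi \<in> carrier_mat m m" unfolding Gi_def by (intro carrier_matI) simp_all
  note carrier_matD[OF Gi, simp]
  have Gc: "T\<^sup>T * M * T \<in> carrier_mat m m" by (intro carrier_matI) simp_all
  show "invertible_mat (Sk\<^sup>T * (B\<^sup>T * P * B) * Sk)"
    unfolding G using invertible_matI[OF Gc Gi GGi] .
  have minv_G: "minv (Sk\<^sup>T * (B\<^sup>T * P * B) * Sk) = Gi"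
    unfolding G using minv_eqI[OF Gc Gi GGi] .
  have TiT': "Ti\<^sup>T * T\<^sup>T = 1\<^sub>m m"
    using transpose_mult[OF T(1) Ti(1)] by (simp add: Ti(2))
  have "B * (Sk * Gi * Sk\<^sup>T * (B\<^sup>T * P * B)) =
      (B * Sk) * Gi * ((Sk\<^sup>T * B\<^sup>T) * (P * B))"
    by (simp add: assoc_mult_mat_dim)
  also have "\<dots> = S * (T * (Ti * (Mi * (Ti\<^sup>T * (T\<^sup>T * (S\<^sup>T * (P * B)))))))"
    unfolding BSk BSk_T Gi_def by (simp add: assoc_mult_mat_dim)
  also have "\<dots> = S * (Mi * (S\<^sup>T * (P * B)))"
    using mult_mat_cancel_left[OF Ti(2)] mult_mat_cancel_left[OF TiT'] by simp
  also have "\<dots> = S * Mi * S\<^sup>T * P * B"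
    by (simp add: assoc_mult_mat_dim)
  finally show "B * (Sk * minv (Sk\<^sup>T * (B\<^sup>T * P * B) * Sk) * Sk\<^sup>T * (B\<^sup>T * P * B))
           = S * minv (S\<^sup>T * P * S) * S\<^sup>T * P * B"
    unfolding minv_G Mi_def M_def .
qed

lemma Smat_carrier: "Smat n \<in> carrier_mat (2*n-1) n"
  by (simp add: Smat_def)

lemma Skmat_carrier: "Skmat n k \<in> carrier_mat (2*n-1) n"
  by (simp add: Skmat_def)

lemma Bkmat_carrier: "Bkmat n k \<in> carrier_mat (2*n-1) (2*n-1)"
  by (simp add: Bkmat_def)

(* aggcoef k i j is the coefficient of c_(j+1) in the cumulative value a_i written in the
   [k]-coordinates c, i.e. in the alpha_i of S_[k] (1-based i). *)
definition aggcoef :: "nat \<Rightarrow> nat \<Rightarrow> nat \<Rightarrow> real" where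
  "aggcoef k i j = (if k < i then (if k \<le> j + 1 \<and> j + 1 \<le> i then 1 else 0)
     else (if i \<le> j + 1 \<and> j + 1 \<le> k then 1 else 0))"

lemma Skmat_index:
  assumes "r < 2*n-1" "j < n"
  shows "Skmat n k $$ (r,j) =
    (if r < n - 1 then aggcoef k (topidx n k r) j else if j = r - (n - 1) then 1 else 0)"
  using assms by (simp add: Skmat_def aggcoef_def Let_def)

(* b = T_[k] c expresses the bottom values through the [k]-bottom values (1-based):
   b_1 = c_1 + ... + c_k, b_i = -c_(i-1) for 2 <= i <= k, and b_i = c_i for i > k. *)
definition Tkmat :: "nat \<Rightarrow> nat \<Rightarrow> real mat" where
  "Tkmat n k = mat n n (\<lambda>(i,j).
     if i = 0 then (if j < k then 1 else 0)
     else if i = j + 1 \<and> j + 2 \<le> k then -1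
     else if i = j \<and> k \<le> j then 1 else 0)"

lemma Tkmat_carrier: "Tkmat n k \<in> carrier_mat n n"
  by (simp add: Tkmat_def)

lemma sum_Tkmat_col:
  assumes "1 \<le> k" "1 \<le> m" "m \<le> n" "j < n"
  shows "(\<Sum>i<m. Tkmat n k $$ (i,j)) = aggcoef k m j"
  using assms(2-3)
proof (induction m rule: nat_induct_at_least)
  case base
  then show ?case using assms by (simp add: Tkmat_def aggcoef_def)
next
  case (Suc m)
  then show ?case using assms by (auto simp: Tkmat_def aggcoef_def)
qed

definition Tkinv :: "nat \<Rightarrow> nat \<Rightarrow> real mat" where
  "Tkinv n k = mat n n (\<lambda>(i,j).
     if k \<le> i then (if j = i then 1 else 0)
     else if i + 1 < k then (if j = i + 1 then -1 else 0)
     else (if j < k then 1 else 0))"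

lemma Tkinv_carrier: "Tkinv n k \<in> carrier_mat n n"
  by (simp add: Tkinv_def)

lemma Tkinv_mult_Tkmat:
  assumes "1 \<le> k" "k \<le> n"
  shows "Tkinv n k * Tkmat n k = 1\<^sub>m n"
proof (rule eq_matI)
  fix i j assume "i < dim_row (1\<^sub>m n :: real mat)" "j < dim_col (1\<^sub>m n :: real mat)"
  then have i: "i < n" and j: "j < n" by simp_all
  have row: "(Tkinv n k * Tkmat n k) $$ (i,j) =
      (\<Sum>l<n. Tkinv n k $$ (i,l) * Tkmat n k $$ (l,j))"
    using i j by (simp add: Tkinv_def Tkmat_def scalar_prod_def lessThan_atLeast0)
  consider "k \<le> i" | "i + 1 < k" | "i + 1 = k" by linarith
  then show "(Tkinv n k * Tkmat n k) $$ (i,j) = 1\<^sub>m n $$ (i,j)"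
  proof cases
    case 1
    have "(\<Sum>l<n. Tkinv n k $$ (i,l) * Tkmat n k $$ (l,j)) =
        (\<Sum>l<n. if l = i then Tkmat n k $$ (l,j) else 0)"
      using 1 i by (intro sum.cong) (auto simp: Tkinv_def)
    then show ?thesis using row 1 i j assms by (simp add: Tkmat_def)
  next
    case 2
    have "(\<Sum>l<n. Tkinv n k $$ (i,l) * Tkmat n k $$ (l,j)) =
        (\<Sum>l<n. if l = i + 1 then - Tkmat n k $$ (l,j) else 0)"
      using 2 i by (intro sum.cong) (auto simp: Tkinv_def)
    then show ?thesis using row 2 i j assms by (simp add: Tkmat_def)
  next
    case 3
    have "(\<Sum>l<n. Tkinv n k $$ (i,l) * Tkmat n k $$ (l,j)) =
        (\<Sum>l<n. if l < k then Tkmat n k $$ (l,j) else 0)"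
      using 3 i by (intro sum.cong) (auto simp: Tkinv_def)
    then show ?thesis
      using row 3 i j assms by (auto simp: sum_lessThan_if_less sum_Tkmat_col aggcoef_def)
  qed
qed (simp_all add: Tkinv_def Tkmat_def)

lemma invertible_Tkmat:
  assumes "1 \<le> k" "k \<le> n"
  shows "invertible_mat (Tkmat n k)"
  using mat_mult_left_right_inverse[OF Tkinv_carrier Tkmat_carrier Tkinv_mult_Tkmat[OF assms]]
  by (rule invertible_matI[OF Tkmat_carrier Tkinv_carrier])

(* Row n - 1 of S is b_1 = a_1; here it is read as the aggregate a_1. *)
lemma Smat_mult_index:
  assumes "dim_row X = n" "p < 2*n-1" "j < dim_col X"
  shows "(Smat n * X) $$ (p,j) =
    (if p < n then (\<Sum>i<n-p. X $$ (i,j)) else X $$ (p - (n - 1), j))"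
proof -
  have row: "(Smat n * X) $$ (p,j) = (\<Sum>i<n. Smat n $$ (p,i) * X $$ (i,j))"
    using assms by (simp add: Smat_def scalar_prod_def lessThan_atLeast0)
  show ?thesis
  proof (cases "p < n")
    case True
    have "(\<Sum>i<n. Smat n $$ (p,i) * X $$ (i,j)) =
        (\<Sum>i<n. if i < n - p then X $$ (i,j) else 0)"
      using assms True by (intro sum.cong) (auto simp: Smat_def)
    then show ?thesis using row True by (simp add: sum_lessThan_if_less)
  next
    case False
    have "(\<Sum>i<n. Smat n $$ (p,i) * X $$ (i,j)) =
        (\<Sum>i<n. if i = p - (n - 1) then X $$ (i,j) else 0)"
      using assms False by (intro sum.cong) (auto simp: Smat_def)
    then show ?thesis using row False assms by simp
  qed
qed

definition Bkperm :: "nat \<Rightarrow> nat \<Rightarrow> nat \<Rightarrow> nat" where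
  "Bkperm n k p = (if p < n - k then p else if p = n - k then n + k - 2
     else if p < n + k - 1 then p - 1 else p)"

definition Bksign :: "nat \<Rightarrow> nat \<Rightarrow> nat \<Rightarrow> real" where
  "Bksign n k p = (if n \<le> p \<and> p < n + k - 1 then -1 else 1)"

lemma Bkperm_less:
  assumes "1 \<le> k" "k \<le> n" "p < 2*n-1"
  shows "Bkperm n k p < 2*n-1"
  using assms unfolding Bkperm_def by (simp split: if_split, linarith)

lemma Bkmat_index:
  assumes "1 \<le> k" "k \<le> n" "p < 2*n-1" "q < 2*n-1"
  shows "Bkmat n k $$ (p,q) = (if q = Bkperm n k p then Bksign n k p else 0)"
  using assms by (auto simp: Bkmat_def Bkperm_def Bksign_def)

lemma Bkmat_mult_index:
  assumes "1 \<le> k" "k \<le> n" "dim_row A = 2*n-1" "p < 2*n-1" "j < dim_col A"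
  shows "(Bkmat n k * A) $$ (p,j) = Bksign n k p * A $$ (Bkperm n k p, j)"
proof -
  have "(Bkmat n k * A) $$ (p,j) = (\<Sum>q<2*n-1. Bkmat n k $$ (p,q) * A $$ (q,j))"
    using assms by (simp add: Bkmat_def scalar_prod_def lessThan_atLeast0)
  also have "\<dots> = (\<Sum>q<2*n-1. if q = Bkperm n k p then Bksign n k p * A $$ (q,j) else 0)"
    using assms by (intro sum.cong) (auto simp: Bkmat_index)
  also have "\<dots> = Bksign n k p * A $$ (Bkperm n k p, j)"
    using Bkperm_less[OF assms(1,2,4)] by simp
  finally show ?thesis .
qed

lemma Bkmat_Skmat:
  assumes "1 \<le> k" "k \<le> n"
  shows "Bkmat n k * Skmat n k = Smat n * Tkmat n k"
proof (rule eq_matI)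
  fix p j assume "p < dim_row (Smat n * Tkmat n k)" "j < dim_col (Smat n * Tkmat n k)"
  then have p: "p < 2*n-1" and j: "j < n" by (simp_all add: Smat_def Tkmat_def)
  have lhs: "(Bkmat n k * Skmat n k) $$ (p,j) = Bksign n k p * Skmat n k $$ (Bkperm n k p, j)"
    using assms p j by (intro Bkmat_mult_index) (simp_all add: Skmat_def)
  have rhs: "(Smat n * Tkmat n k) $$ (p,j) =
      (if p < n then aggcoef k (n - p) j else Tkmat n k $$ (p - (n - 1), j))"
  proof -
    have "n - p \<le> n" "p < n \<Longrightarrow> 1 \<le> n - p" by simp_all
    then show ?thesis
      using assms p j Tkmat_carrier[of n k] by (simp add: Smat_mult_index sum_Tkmat_col)
  qed
  consider "p < n" "p \<noteq> n - k" | "p = n - k" | "n \<le> p" "p < n + k - 1" | "n + k - 1 \<le> p"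
    by linarith
  then show "(Bkmat n k * Skmat n k) $$ (p,j) = (Smat n * Tkmat n k) $$ (p,j)"
  proof cases
    case 1
    then have "Bkperm n k p < n - 1" "topidx n k (Bkperm n k p) = n - p" "Bksign n k p = 1"
      using assms by (auto simp: Bkperm_def Bksign_def topidx_def)
    then show ?thesis using 1 p j unfolding lhs rhs by (simp add: Skmat_index)
  next
    case 2
    then have "Bkperm n k p = (n - 1) + (k - 1)" "Bksign n k p = 1"
      using assms by (auto simp: Bkperm_def Bksign_def)
    then show ?thesis using 2 assms j unfolding lhs rhs by (auto simp: Skmat_index aggcoef_def)
  next
    case 3
    then have "Bkperm n k p = (n - 1) + (p - n)" "Bksign n k p = -1"
      using assms by (auto simp: Bkperm_def Bksign_def)
    then show ?thesis using 3 assms j unfolding lhs rhs by (auto simp: Skmat_index Tkmat_def)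
  next
    case 4
    then have "Bkperm n k p = p" "Bksign n k p = 1"
      using assms by (auto simp: Bkperm_def Bksign_def)
    then show ?thesis using 4 assms p j unfolding lhs rhs by (auto simp: Skmat_index Tkmat_def)
  qed
qed (simp_all add: Smat_def Skmat_def Tkmat_def Bkmat_def)

theorem theorem1:
  fixes n k :: nat and W Wk :: "real mat" and yhat yhatk :: "real vec"
  assumes "n > 1" and "1 \<le> k" and "k \<le> n"
    and "W \<in> carrier_mat (2*n-1) (2*n-1)" and "invertible_mat W"
    and "invertible_mat ((Smat n)\<^sup>T * minv W * Smat n)"
    and "Wk \<in> carrier_mat (2*n-1) (2*n-1)" and "invertible_mat Wk"
    and "yhat \<in> carrier_vec (2*n-1)" and "yhatk \<in> carrier_vec (2*n-1)"
    and "yhat = Bkmat n k *\<^sub>v yhatk"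
    and "minv Wk = (Bkmat n k)\<^sup>T * minv W * Bkmat n k"
  shows "invertible_mat ((Skmat n k)\<^sup>T * minv Wk * Skmat n k) \<and>
    Smat n * minv ((Smat n)\<^sup>T * minv W * Smat n) * (Smat n)\<^sup>T * minv W *\<^sub>v yhat
    = Bkmat n k *\<^sub>v
      (Skmat n k * minv ((Skmat n k)\<^sup>T * minv Wk * Skmat n k) * (Skmat n k)\<^sup>T * minv Wk
         *\<^sub>v yhatk)"
proof -
  let ?B = "Bkmat n k" and ?S = "Smat n" and ?Sk = "Skmat n k" and ?P = "minv W"
  have P: "?P \<in> carrier_mat (2*n-1) (2*n-1)"
    using invertible_mat_minv(1)[OF assms(5,4)] .
  note dims = carrier_matD[OF P] carrier_matD[OF Bkmat_carrier] carrier_matD[OF Smat_carrier]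
    carrier_matD[OF Skmat_carrier]
  note change = reconciliation_change_of_basis[OF Bkmat_carrier Smat_carrier Skmat_carrier
      Tkmat_carrier invertible_Tkmat[OF assms(2,3)] P assms(6) Bkmat_Skmat[OF assms(2,3)],
      folded assms(12)]
  have "?S * minv (?S\<^sup>T * ?P * ?S) * ?S\<^sup>T * ?P *\<^sub>v yhat
      = ?S * minv (?S\<^sup>T * ?P * ?S) * ?S\<^sup>T * ?P * ?B *\<^sub>v yhatk"
    using assms(10,11) by (simp add: assoc_mult_mat_vec_dim dims)
  also have "\<dots> = ?B * (?Sk * minv (?Sk\<^sup>T * minv Wk * ?Sk) * ?Sk\<^sup>T * minv Wk) *\<^sub>v yhatk"
    by (simp only: change(2))
  also have "\<dots> = ?B *\<^sub>v (?Sk * minv (?Sk\<^sup>T * minv Wk * ?Sk) * ?Sk\<^sup>T * minv Wk *\<^sub>v yhatk)"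
    using assms(10,12) by (simp add: assoc_mult_mat_vec_dim dims)
  finally show ?thesis using change(1) by simp
qed

end
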